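(* Let $m\ge 2$ and let $B$ be a blocker in $CK(2m)$. Then the boundary edges belonging to $B$ are all contained in some set of $m$ consecutive boundary edges $\{[s,s+1],[s+1,s+2],\dots,[s+m-1,s+m]\}$ (labels modulo $2m$).
   Context: $CK(2m)$ denotes the complete convex geometric graph whose vertices are the $2m$ vertices of a convex polygon, labelled cyclically $0,1,\dots,2m-1$ (labels modulo $2m$), and whose edges are all straight segments between pairs of vertices. Two edges with four distinct endpoints cross iff their endpoints alternate in the cyclic order. A simple perfect matching (SPM) is a set of $m$ edges that are pairwise disjoint (no common endpoint and no crossing). A blocking set is a set of edges containing at least one edge of every SPM. A blocker is a blocking set with exactly $m$ edges. Boundary edges are the edges $[i,i+1]$. *)

theory Defs
  imports Main
begin

(* Vertices of CK(2m): the naturals 0..2m-1 in cyclic order.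
   An edge is a two-element set {a,b} of vertices. *)

definition is_edge :: "nat \<Rightarrow> nat set \<Rightarrow> bool" where
  "is_edge m e \<longleftrightarrow> (\<exists>a b. a < b \<and> b < 2*m \<and> e = {a, b})"

definition all_edges :: "nat \<Rightarrow> nat set set" where
  "all_edges m = {e. is_edge m e}"

(* two edges with four distinct endpoints cross iff their endpoints alternate
   in the cyclic order; for a < b this means exactly one of c, d lies strictly
   between a and b *)
definition crosses :: "nat set \<Rightarrow> nat set \<Rightarrow> bool" where
  "crosses e f \<longleftrightarrow> (\<exists>a b c d. a < b \<and> c < d \<and> e = {a,b} \<and> f = {c,d} \<and>
      a \<noteq> c \<and> a \<noteq> d \<and> b \<noteq> c \<and> b \<noteq> d \<and>
      ((a < c \<and> c < b) \<noteq> (a < d \<and> d < b)))"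

definition disjoint_edges :: "nat set \<Rightarrow> nat set \<Rightarrow> bool" where
  "disjoint_edges e f \<longleftrightarrow> e \<inter> f = {} \<and> \<not> crosses e f"

definition is_SPM :: "nat \<Rightarrow> nat set set \<Rightarrow> bool" where
  "is_SPM m M \<longleftrightarrow> M \<subseteq> all_edges m \<and> card M = m \<and>
     (\<forall>e\<in>M. \<forall>f\<in>M. e \<noteq> f \<longrightarrow> disjoint_edges e f)"

definition is_blocking_set :: "nat \<Rightarrow> nat set set \<Rightarrow> bool" where
  "is_blocking_set m B \<longleftrightarrow> B \<subseteq> all_edges m \<and> (\<forall>M. is_SPM m M \<longrightarrow> M \<inter> B \<noteq> {})"

definition is_blocker :: "nat \<Rightarrow> nat set set \<Rightarrow> bool" where
  "is_blocker m B \<longleftrightarrow> is_blocking_set m B \<and> card B = m"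

definition bedge :: "nat \<Rightarrow> nat \<Rightarrow> nat set" where
  "bedge m i = {i mod (2*m), (i+1) mod (2*m)}"

definition boundary_edges :: "nat \<Rightarrow> nat set set" where
  "boundary_edges m = {bedge m i | i. i < 2*m}"

end

theory Submission
  imports Defs
begin

(* The class of a chord {x, y} is x + y mod 2m.  For each odd class 2t+1 the m chords of that
   class are pairwise parallel and form a matching (a rotated "rainbow" of nested chords),
   so B contains exactly one chord of every odd class.  The boundary edge [i, i+1] has class
   2i+1, hence B never contains two antipodal boundary edges [i, i+1] and [i+m, i+m+1].

   If the boundary edges of B were not contained in any window of m consecutive ones, a
   counting argument on their positions yields boundary edges of B at positions a, a+b, a+c
   with 0 < b < m < c < 2m and c - b < m.  Three consecutive rainbows of sizes m-(c-b), c-m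
   and m-b, suitably rotated, then form a matching whose chords have the classes of these
   three edges but avoid them; it misses B, a contradiction. *)

lemma mod_add_cancel_nat:
  fixes a p q n :: nat
  shows "(a + p) mod n = (a + q) mod n \<longleftrightarrow> p mod n = q mod n"
proof -
  have int_mod: "x mod n = y mod n \<longleftrightarrow> int n dvd int x - int y" for x y
    by (metis mod_eq_dvd_iff of_nat_eq_iff of_nat_mod)
  show ?thesis unfolding int_mod by simp
qed

lemma int_mod_small: "- (n::int) \<le> z \<Longrightarrow> z < n \<Longrightarrow> z mod n = (if z < 0 then z + n else z)"
proof (cases "z < 0")
  case True
  assume "- n \<le> z"
  then have "(z + n) mod n = z + n" using True by (intro mod_pos_pos_trivial) auto
  then show ?thesis using True by simp
qed simp

lemma mod_offset:
  fixes a i n :: nat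
  assumes "0 < n"
  shows "\<exists>t < n. (a + t) mod n = i mod n"
proof -
  define t where "t = (i + (n - a mod n)) mod n"
  have "(a + t) mod n = (a mod n + (i + (n - a mod n))) mod n"
    unfolding t_def by (simp add: mod_add_right_eq mod_add_left_eq)
  also have "a mod n + (i + (n - a mod n)) = i + n"
    using mod_less_divisor[OF assms, of a] by linarith
  finally show ?thesis using assms unfolding t_def by (intro exI[of _ t]) (simp add: t_def)
qed

(* Unlike the linear description of crossings
   used in the definition, this notion is manifestly invariant under rotations. *)
definition arc :: "nat \<Rightarrow> nat \<Rightarrow> nat \<Rightarrow> nat \<Rightarrow> bool" where
  "arc N a b x \<longleftrightarrow>
     0 < (int x - int a) mod int N \<and> (int x - int a) mod int N < (int b - int a) mod int N"

lemma arc_rotate: "arc N ((a + k) mod N) ((b + k) mod N) ((x + k) mod N) \<longleftrightarrow> arc N a b x"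
  by (simp add: arc_def of_nat_mod mod_diff_eq)

lemma arc_linear:
  assumes "a < N" "b < N" "x < N"
  shows "arc N a b x \<longleftrightarrow> (if a \<le> b then a < x \<and> x < b else a < x \<or> x < b)"
  using assms by (auto simp: arc_def int_mod_small)

lemma arc_opposite:
  assumes "a < N" "b < N" "x < N" "a \<noteq> b" "x \<notin> {a, b}"
  shows "arc N b a x \<longleftrightarrow> \<not> arc N a b x"
  using assms by (auto simp: arc_linear)

lemma doubleton_ordered: "(a::nat) < b \<Longrightarrow> p < q \<Longrightarrow> {a, b} = {p, q} \<longleftrightarrow> a = p \<and> b = q"
  by (auto simp: doubleton_eq_iff)

lemma crosses_ordered:
  assumes "p < q" "r < s"
  shows "crosses {p, q} {r, s} \<longleftrightarrow>
           p \<notin> {r, s} \<and> q \<notin> {r, s} \<and> ((p < r \<and> r < q) \<noteq> (p < s \<and> s < q))"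
proof
  assume "crosses {p, q} {r, s}"
  then obtain a b c d where "a < b" "c < d" "{a, b} = {p, q}" "{c, d} = {r, s}"
      "a \<noteq> c" "a \<noteq> d" "b \<noteq> c" "b \<noteq> d" "(a < c \<and> c < b) \<noteq> (a < d \<and> d < b)"
    unfolding crosses_def by metis
  moreover from this have "a = p" "b = q" "c = r" "d = s"
    using doubleton_ordered assms by blast+
  ultimately show "p \<notin> {r, s} \<and> q \<notin> {r, s} \<and> ((p < r \<and> r < q) \<noteq> (p < s \<and> s < q))"
    by auto
next
  assume "p \<notin> {r, s} \<and> q \<notin> {r, s} \<and> ((p < r \<and> r < q) \<noteq> (p < s \<and> s < q))"
  then show "crosses {p, q} {r, s}" unfolding crosses_def using assms by blast
qed

lemma crosses_cyclic_ordered: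
  assumes "b < N" "c < N" "d < N" "a < b" "c \<noteq> d"
  shows "crosses {a, b} {c, d} \<longleftrightarrow>
           a \<notin> {c, d} \<and> b \<notin> {c, d} \<and> (arc N a b c \<noteq> arc N a b d)"
proof (cases "c < d")
  case True
  then show ?thesis using assms by (simp add: crosses_ordered arc_linear)
next
  case False
  then have "d < c" using assms by simp
  have "{c, d} = {d, c}" by auto
  then show ?thesis using assms \<open>d < c\<close> by (auto simp add: crosses_ordered arc_linear)
qed

lemma crosses_cyclic:
  assumes "a < N" "b < N" "c < N" "d < N" "a \<noteq> b" "c \<noteq> d"
  shows "crosses {a, b} {c, d} \<longleftrightarrow>
           a \<notin> {c, d} \<and> b \<notin> {c, d} \<and> (arc N a b c \<noteq> arc N a b d)"
proof (cases "a < b")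
  case True
  then show ?thesis using assms crosses_cyclic_ordered by blast
next
  case False
  then have "b < a" using assms by simp
  have "{a, b} = {b, a}" by auto
  then show ?thesis
    using assms crosses_cyclic_ordered[OF assms(1,3,4) \<open>b < a\<close> assms(6)] arc_opposite[of a N b]
    by auto
qed

lemma edge_iff: "e \<in> all_edges m \<longleftrightarrow> (\<exists>a b. a \<noteq> b \<and> a < 2 * m \<and> b < 2 * m \<and> e = {a, b})"
proof
  assume "\<exists>a b. a \<noteq> b \<and> a < 2 * m \<and> b < 2 * m \<and> e = {a, b}"
  then obtain a b where "a \<noteq> b" "a < 2 * m" "b < 2 * m" "e = {a, b}" by blast
  then have "min a b < max a b \<and> max a b < 2 * m \<and> e = {min a b, max a b}"
    by (auto simp: min_def max_def)
  then show "e \<in> all_edges m" unfolding all_edges_def is_edge_def by blast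
next
  assume "e \<in> all_edges m"
  then obtain a b where "a < b" "b < 2 * m" "e = {a, b}"
    unfolding all_edges_def is_edge_def by blast
  then show "\<exists>a b. a \<noteq> b \<and> a < 2 * m \<and> b < 2 * m \<and> e = {a, b}"
    by (intro exI[of _ a] exI[of _ b]) simp
qed

lemma edge_cases:
  assumes "e \<in> all_edges m"
  obtains a b where "a \<noteq> b" "a < 2 * m" "b < 2 * m" "e = {a, b}"
  using assms edge_iff by blast

definition rotate_edge :: "nat \<Rightarrow> nat \<Rightarrow> nat set \<Rightarrow> nat set" where
  "rotate_edge m k e = (\<lambda>x. (x + k) mod (2 * m)) ` e"

lemma rotate_edge_pair: "rotate_edge m k {x, y} = {(x + k) mod (2 * m), (y + k) mod (2 * m)}"
  by (simp add: rotate_edge_def)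

lemma rotate_vertex_eq_iff:
  fixes x y k m :: nat
  assumes "x < 2 * m" "y < 2 * m"
  shows "(x + k) mod (2 * m) = (y + k) mod (2 * m) \<longleftrightarrow> x = y"
  using assms mod_add_cancel_nat[of k x "2 * m" y] by (simp add: add.commute)

lemma rotate_edge_edge:
  assumes "e \<in> all_edges m"
  shows "rotate_edge m k e \<in> all_edges m"
proof -
  obtain a b where ab: "a \<noteq> b" "a < 2 * m" "b < 2 * m" "e = {a, b}"
    using assms by (rule edge_cases)
  moreover have "(a + k) mod (2 * m) \<noteq> (b + k) mod (2 * m)"
    using ab rotate_vertex_eq_iff by blast
  moreover have "0 < m" using ab by simp
  ultimately show ?thesis unfolding edge_iff
    by (intro exI[of _ "(a + k) mod (2 * m)"] exI[of _ "(b + k) mod (2 * m)"])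
      (simp add: rotate_edge_pair)
qed

lemma disjoint_rotate:
  assumes "e \<in> all_edges m" "f \<in> all_edges m"
  shows "disjoint_edges (rotate_edge m k e) (rotate_edge m k f) \<longleftrightarrow> disjoint_edges e f"
proof -
  obtain a b where ab: "a \<noteq> b" "a < 2 * m" "b < 2 * m" "e = {a, b}"
    using assms(1) by (rule edge_cases)
  obtain c d where cd: "c \<noteq> d" "c < 2 * m" "d < 2 * m" "f = {c, d}"
    using assms(2) by (rule edge_cases)
  let ?r = "\<lambda>x. (x + k) mod (2 * m)"
  have inj: "?r x = ?r y \<longleftrightarrow> x = y" if "x \<in> {a, b, c, d}" "y \<in> {a, b, c, d}" for x y
    using that ab cd rotate_vertex_eq_iff by auto
  have "0 < m" using ab by simp
  have "disjoint_edges {?r a, ?r b} {?r c, ?r d} \<longleftrightarrow>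
        ?r a \<notin> {?r c, ?r d} \<and> ?r b \<notin> {?r c, ?r d} \<and>
        arc (2 * m) (?r a) (?r b) (?r c) = arc (2 * m) (?r a) (?r b) (?r d)"
    unfolding disjoint_edges_def using ab cd inj \<open>0 < m\<close>
    by (subst crosses_cyclic[where N = "2 * m"]) auto
  also have "\<dots> \<longleftrightarrow> a \<notin> {c, d} \<and> b \<notin> {c, d} \<and> arc (2 * m) a b c = arc (2 * m) a b d"
    using inj by (simp add: arc_rotate)
  also have "\<dots> \<longleftrightarrow> disjoint_edges {a, b} {c, d}"
    unfolding disjoint_edges_def using ab cd by (subst crosses_cyclic[where N = "2 * m"]) auto
  finally show ?thesis using ab cd by (simp add: rotate_edge_pair)
qed

lemma SPM_rotate:
  assumes "is_SPM m M"
  shows "is_SPM m (rotate_edge m k ` M)"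
proof -
  have edges: "M \<subseteq> all_edges m" and card: "card M = m"
    and disj: "\<And>e f. e \<in> M \<Longrightarrow> f \<in> M \<Longrightarrow> e \<noteq> f \<Longrightarrow> disjoint_edges e f"
    using assms unfolding is_SPM_def by auto
  have "inj_on (\<lambda>x. (x + k) mod (2 * m)) {..<2 * m}"
    by (rule inj_onI) (simp add: rotate_vertex_eq_iff)
  moreover have "M \<subseteq> Pow {..<2 * m}"
    using edges by (auto simp: all_edges_def is_edge_def)
  ultimately have inj: "inj_on (rotate_edge m k) M"
    unfolding rotate_edge_def by (rule inj_on_subset[OF inj_on_image_Pow])
  have "rotate_edge m k ` M \<subseteq> all_edges m"
    using edges rotate_edge_edge by blast
  moreover have "card (rotate_edge m k ` M) = m"
    using card_image[OF inj] card by simp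
  moreover have "disjoint_edges (rotate_edge m k e) (rotate_edge m k f)"
    if "e \<in> M" "f \<in> M" "rotate_edge m k e \<noteq> rotate_edge m k f" for e f
    using that disj edges disjoint_rotate by (metis subsetD)
  ultimately show ?thesis unfolding is_SPM_def by blast
qed

definition rainbow :: "nat \<Rightarrow> nat \<Rightarrow> nat set set" where
  "rainbow s L = (\<lambda>j. {s + j, s + 2 * L - 1 - j}) ` {..<L}"

lemma rainbow_cases:
  assumes "e \<in> rainbow s L"
  obtains j where "j < L" "e = {s + j, s + 2 * L - 1 - j}" "s + j < s + 2 * L - 1 - j"
  using assms unfolding rainbow_def by fastforce

lemma finite_rainbow: "finite (rainbow s L)"
  by (simp add: rainbow_def)

lemma card_rainbow: "card (rainbow s L) = L"
proof -
  have "inj_on (\<lambda>j. {s + j, s + 2 * L - 1 - j}) {..<L}"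
  proof (rule inj_onI)
    fix i j assume "i \<in> {..<L}" "j \<in> {..<L}" "{s + i, s + 2 * L - 1 - i} = {s + j, s + 2 * L - 1 - j}"
    then show "i = j" using doubleton_ordered[of "s + i" "s + 2 * L - 1 - i" "s + j" "s + 2 * L - 1 - j"]
      by simp
  qed
  then show ?thesis unfolding rainbow_def by (simp add: card_image)
qed

lemma rainbow_edges:
  assumes "s + 2 * L \<le> 2 * m"
  shows "rainbow s L \<subseteq> all_edges m"
proof
  fix e assume "e \<in> rainbow s L"
  then obtain j where "j < L" "e = {s + j, s + 2 * L - 1 - j}" "s + j < s + 2 * L - 1 - j"
    by (rule rainbow_cases)
  moreover have "s + 2 * L - 1 - j < 2 * m" using assms calculation(1) by linarith
  ultimately show "e \<in> all_edges m" unfolding all_edges_def is_edge_def by blast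
qed

lemma disjoint_nested_or_separated:
  assumes "p < q" "r < s" "(p < r \<and> s < q) \<or> (r < p \<and> q < s) \<or> q < r \<or> s < p"
  shows "disjoint_edges {p, q} {r, s}"
  unfolding disjoint_edges_def crosses_ordered[OF assms(1,2)] using assms by auto

lemma rainbow_chords_disjoint:
  assumes "e \<in> rainbow s L" "f \<in> rainbow s' L'" "e \<noteq> f"
    and "(s = s' \<and> L = L') \<or> s + 2 * L \<le> s' \<or> s' + 2 * L' \<le> s"
  shows "disjoint_edges e f"
proof -
  obtain i where i: "i < L" "e = {s + i, s + 2 * L - 1 - i}" "s + i < s + 2 * L - 1 - i"
    using assms(1) by (rule rainbow_cases)
  obtain j where j: "j < L'" "f = {s' + j, s' + 2 * L' - 1 - j}" "s' + j < s' + 2 * L' - 1 - j"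
    using assms(2) by (rule rainbow_cases)
  consider "s = s'" "L = L'" "i < j" | "s = s'" "L = L'" "j < i"
    | "s + 2 * L \<le> s'" | "s' + 2 * L' \<le> s"
    using assms(3,4) i(2) j(2) nat_neq_iff by blast
  then have "(s + i < s' + j \<and> s' + 2 * L' - 1 - j < s + 2 * L - 1 - i)
    \<or> (s' + j < s + i \<and> s + 2 * L - 1 - i < s' + 2 * L' - 1 - j)
    \<or> s + 2 * L - 1 - i < s' + j \<or> s' + 2 * L' - 1 - j < s + i"
    by cases (use i(1) j(1) in linarith)+
  then show ?thesis
    unfolding i(2) j(2) by (rule disjoint_nested_or_separated[OF i(3) j(3)])
qed

lemma rainbow_chord_range: "e \<in> rainbow s L \<Longrightarrow> x \<in> e \<Longrightarrow> s \<le> x \<and> x < s + 2 * L"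
  by (elim rainbow_cases) auto

lemma rainbows_disjoint:
  assumes "s + 2 * L \<le> s'"
  shows "rainbow s L \<inter> rainbow s' L' = {}"
proof (rule ccontr)
  assume "rainbow s L \<inter> rainbow s' L' \<noteq> {}"
  then obtain e where e: "e \<in> rainbow s L" "e \<in> rainbow s' L'" by blast
  then obtain x where "x \<in> e" by (auto elim: rainbow_cases)
  then have "x < s + 2 * L" "s' \<le> x" using e rainbow_chord_range by blast+
  then show False using assms by simp
qed

definition three_rainbows :: "nat \<Rightarrow> nat \<Rightarrow> nat \<Rightarrow> nat set set" where
  "three_rainbows L1 L2 L3 = rainbow 0 L1 \<union> rainbow (2 * L1) L2 \<union> rainbow (2 * L1 + 2 * L2) L3"

lemma SPM_three_rainbows:
  assumes "L1 + L2 + L3 = m"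
  shows "is_SPM m (three_rainbows L1 L2 L3)"
proof -
  have "three_rainbows L1 L2 L3 \<subseteq> all_edges m"
    unfolding three_rainbows_def using assms rainbow_edges[of _ _ m] by simp
  moreover have "card (three_rainbows L1 L2 L3) = m"
    unfolding three_rainbows_def using assms
    by (simp add: card_Un_disjoint finite_rainbow rainbows_disjoint card_rainbow Int_Un_distrib2)
  moreover have "disjoint_edges e f"
    if ef: "e \<in> three_rainbows L1 L2 L3" "f \<in> three_rainbows L1 L2 L3" and "e \<noteq> f" for e f
  proof -
    let ?blocks = "{(0, L1), (2 * L1, L2), (2 * L1 + 2 * L2, L3)}"
    obtain s L s' L' where "(s, L) \<in> ?blocks" "(s', L') \<in> ?blocks"
      and "e \<in> rainbow s L" "f \<in> rainbow s' L'"
      using ef unfolding three_rainbows_def by blast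
    moreover from calculation(1,2) have "(s = s' \<and> L = L') \<or> s + 2 * L \<le> s' \<or> s' + 2 * L' \<le> s"
      by auto
    ultimately show ?thesis using \<open>e \<noteq> f\<close> by (intro rainbow_chords_disjoint)
  qed
  ultimately show ?thesis unfolding is_SPM_def by blast
qed

definition chord_class :: "nat \<Rightarrow> nat set \<Rightarrow> nat" where
  "chord_class m e = (\<Sum>e) mod (2 * m)"

lemma class_rotated_chord:
  assumes "x \<noteq> y" "x < 2 * m" "y < 2 * m"
  shows "chord_class m (rotate_edge m k {x, y}) = (x + y + 2 * k) mod (2 * m)"
proof -
  have "(x + k) mod (2 * m) \<noteq> (y + k) mod (2 * m)"
    using assms rotate_vertex_eq_iff by blast
  then have "chord_class m (rotate_edge m k {x, y})
      = ((x + k) mod (2 * m) + (y + k) mod (2 * m)) mod (2 * m)"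
    by (simp add: chord_class_def rotate_edge_pair)
  also have "\<dots> = ((x + k) + (y + k)) mod (2 * m)"
    by (simp add: mod_add_eq)
  also have "(x + k) + (y + k) = x + y + 2 * k" by simp
  finally show ?thesis .
qed

lemma class_rotated_rainbow:
  assumes "s + 2 * L \<le> 2 * m" "e \<in> rotate_edge m k ` rainbow s L"
  shows "chord_class m e = (2 * s + 2 * L - 1 + 2 * k) mod (2 * m)"
proof -
  obtain j where j: "j < L" "e = rotate_edge m k {s + j, s + 2 * L - 1 - j}"
    "s + j < s + 2 * L - 1 - j"
    using assms(2) by (auto elim: rainbow_cases)
  then have "chord_class m e = (s + j + (s + 2 * L - 1 - j) + 2 * k) mod (2 * m)"
    using class_rotated_chord[of "s + j" "s + 2 * L - 1 - j" m k] j assms(1) by simp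
  also have "s + j + (s + 2 * L - 1 - j) = 2 * s + 2 * L - 1" using j by linarith
  finally show ?thesis .
qed

lemma class_bedge:
  assumes "0 < m"
  shows "chord_class m (bedge m i) = (2 * i + 1) mod (2 * m)"
proof -
  have "i mod (2 * m) \<noteq> (i + 1) mod (2 * m)"
    using assms mod_add_cancel_nat[of i 0 "2 * m" 1] by simp
  then have "chord_class m (bedge m i) = (i mod (2 * m) + (i + 1) mod (2 * m)) mod (2 * m)"
    by (simp add: chord_class_def bedge_def)
  also have "\<dots> = (2 * i + 1) mod (2 * m)" by (simp add: mod_add_eq mult_2)
  finally show ?thesis .
qed

(* For t < m, the full rainbow rotated by t + 1 is a simple perfect matching all of whose chords
   have class 2t+1; hence every blocker contains a chord of each odd class. *)
lemma blocker_meets_odd_class: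
  assumes "0 < m" "is_blocker m B" "t < m"
  shows "2 * t + 1 \<in> chord_class m ` B"
proof -
  let ?Q = "rotate_edge m (t + 1) ` rainbow 0 m"
  have "is_SPM m ?Q"
    using SPM_rotate[OF SPM_three_rainbows[of m 0 0]] by (simp add: three_rainbows_def rainbow_def)
  then obtain e where "e \<in> ?Q" "e \<in> B"
    using assms(2) unfolding is_blocker_def is_blocking_set_def by blast
  have "chord_class m e = (2 * 0 + 2 * m - 1 + 2 * (t + 1)) mod (2 * m)"
    using \<open>e \<in> ?Q\<close> by (intro class_rotated_rainbow) simp_all
  also have "2 * 0 + 2 * m - 1 + 2 * (t + 1) = (2 * t + 1) + 2 * m" using assms(1) by simp
  also have "((2 * t + 1) + 2 * m) mod (2 * m) = 2 * t + 1"
    by (subst mod_add_self2) (use assms(3) in simp)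
  finally show ?thesis using \<open>e \<in> B\<close> by (metis image_eqI)
qed

(* Uniqueness of classes: the m edges of a blocker realise all m odd classes, so their classes
   are pairwise distinct. *)
lemma blocker_class_inj:
  assumes "0 < m" "is_blocker m B"
  shows "inj_on (chord_class m) B"
proof -
  have card_B: "card B = m" using assms(2) unfolding is_blocker_def by simp
  then have fin_B: "finite B" using assms(1) by (intro card_ge_0_finite) simp
  have "(\<lambda>t. 2 * t + 1) ` {..<m} \<subseteq> chord_class m ` B"
    using blocker_meets_odd_class[OF assms] by blast
  then have "card ((\<lambda>t. 2 * t + 1) ` {..<m}) \<le> card (chord_class m ` B)"
    using fin_B by (intro card_mono) simp_all
  moreover have "card ((\<lambda>t. 2 * t + 1) ` {..<m}) = m"
    by (simp add: card_image inj_on_def)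
  moreover have "card (chord_class m ` B) \<le> card B" using fin_B by (rule card_image_le)
  ultimately show ?thesis using card_B fin_B by (intro eq_card_imp_inj_on) simp_all
qed

lemma bedge_mod: "x mod (2 * m) = y mod (2 * m) \<Longrightarrow> bedge m x = bedge m y"
  unfolding bedge_def by (metis mod_add_left_eq)

lemma bedge_eq_iff:
  assumes "2 \<le> m"
  shows "bedge m x = bedge m y \<longleftrightarrow> x mod (2 * m) = y mod (2 * m)"
proof
  assume eq: "bedge m x = bedge m y"
  show "x mod (2 * m) = y mod (2 * m)"
  proof (rule ccontr)
    assume "x mod (2 * m) \<noteq> y mod (2 * m)"
    then have "x mod (2 * m) = (y + 1) mod (2 * m)" "(x + 1) mod (2 * m) = y mod (2 * m)"
      using eq unfolding bedge_def doubleton_eq_iff by auto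
    then have "(y + 2) mod (2 * m) = (y + 0) mod (2 * m)"
      by (metis mod_add_left_eq add.assoc one_add_one add_0_right)
    then have "2 mod (2 * m) = 0" using mod_add_cancel_nat[of y 2 "2 * m" 0] by simp
    then show False using assms by simp
  qed
qed (rule bedge_mod)

lemma bedge_antipodal_ne:
  assumes "2 \<le> m"
  shows "bedge m (x + m) \<noteq> bedge m x"
  using assms mod_add_cancel_nat[of x m "2 * m" 0] by (simp add: bedge_eq_iff)

lemma class_bedge_antipodal:
  assumes "0 < m"
  shows "chord_class m (bedge m (x + m)) = chord_class m (bedge m x)"
proof -
  have "chord_class m (bedge m (x + m)) = ((2 * x + 1) + 2 * m) mod (2 * m)"
    using assms class_bedge[of m "x + m"] by (simp add: algebra_simps)
  also have "\<dots> = chord_class m (bedge m x)"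
    using assms by (simp only: mod_add_self2 class_bedge)
  finally show ?thesis .
qed

lemma blocker_antipodal:
  assumes "2 \<le> m" "is_blocker m B" "bedge m x \<in> B"
  shows "bedge m (x + m) \<notin> B"
proof
  assume "bedge m (x + m) \<in> B"
  then have "bedge m (x + m) = bedge m x"
    using blocker_class_inj[of m B] class_bedge_antipodal[of m x] assms by (simp add: inj_on_def)
  then show False using bedge_antipodal_ne[OF assms(1)] by blast
qed

lemma rainbow_boundary_chord:
  assumes "L < m" "s + 2 * L \<le> 2 * m" "f \<in> rainbow s L" "rotate_edge m k f = bedge m p"
  shows "rotate_edge m k f = bedge m (s + L - 1 + k)"
proof -
  let ?r = "\<lambda>x. (x + k) mod (2 * m)"
  obtain j where j: "j < L" "f = {s + j, s + 2 * L - 1 - j}" "s + j < s + 2 * L - 1 - j"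
    using assms(3) by (rule rainbow_cases)
  define x y where "x = s + j" and "y = s + 2 * L - 1 - j"
  have xy: "x < y" "y < 2 * m" using j assms(2) unfolding x_def y_def by linarith+
  have "{?r x, ?r y} = {p mod (2 * m), (p + 1) mod (2 * m)}"
    using assms(4) unfolding j(2) x_def y_def rotate_edge_pair bedge_def .
  then consider "?r x = p mod (2 * m)" "?r y = (p + 1) mod (2 * m)"
    | "?r x = (p + 1) mod (2 * m)" "?r y = p mod (2 * m)"
    by (auto simp: doubleton_eq_iff)
  then have "y = x + 1"
  proof cases
    case 1
    then have "?r y = ?r (x + 1)" by (metis mod_add_left_eq add.commute add.left_commute)
    then show ?thesis using xy rotate_vertex_eq_iff by (metis Suc_eq_plus1 Suc_lessI order.strict_trans)
  next
    case 2
    then have "?r x = ?r (y + 1)" by (metis mod_add_left_eq add.commute add.left_commute)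
    then have "x mod (2 * m) = (y + 1) mod (2 * m)" using mod_add_cancel_nat by (metis add.commute)
    show ?thesis
    proof (cases "y + 1 < 2 * m")
      case True
      then show ?thesis using \<open>x mod (2 * m) = (y + 1) mod (2 * m)\<close> xy by simp
    next
      case False
      then have "y + 1 = 2 * m" using xy by simp
      then have "x = 0" using \<open>x mod (2 * m) = (y + 1) mod (2 * m)\<close> xy by simp
      then show ?thesis using False j assms(1) unfolding x_def y_def by linarith
    qed
  qed
  then have "j = L - 1" using j unfolding x_def y_def by linarith
  then show ?thesis
    using j(1) unfolding j(2) rotate_edge_pair bedge_def by (simp add: algebra_simps)
qed

(* If the boundary edge antipodal to the innermost chord of a short rotated rainbow lies in
   the blocker, then the whole rotated rainbow avoids the blocker: its chords share the class
   of that boundary edge, which is the only edge of its class in the blocker. *)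
lemma rainbow_avoids_blocker:
  assumes "2 \<le> m" "is_blocker m B" "L < m" "s + 2 * L \<le> 2 * m"
    and "bedge m p \<in> B" "p mod (2 * m) = (s + L - 1 + k + m) mod (2 * m)"
  shows "rotate_edge m k ` rainbow s L \<inter> B = {}"
proof (rule ccontr)
  assume "rotate_edge m k ` rainbow s L \<inter> B \<noteq> {}"
  then obtain f where f: "f \<in> rainbow s L" "rotate_edge m k f \<in> B" by blast
  then have "0 < L" by (auto elim: rainbow_cases)
  have m0: "0 < m" using assms(1) by simp
  let ?inner = "s + L - 1 + k"
  have "chord_class m (rotate_edge m k f) = (2 * s + 2 * L - 1 + 2 * k) mod (2 * m)"
    using f(1) assms(4) by (intro class_rotated_rainbow) auto
  also have "2 * s + 2 * L - 1 + 2 * k = 2 * ?inner + 1" using \<open>0 < L\<close> by simp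
  also have "(2 * ?inner + 1) mod (2 * m) = chord_class m (bedge m ?inner)"
    using m0 by (simp only: class_bedge)
  also have "\<dots> = chord_class m (bedge m (?inner + m))"
    using m0 by (simp add: class_bedge_antipodal)
  also have "bedge m (?inner + m) = bedge m p"
    using assms(6) by (intro bedge_mod) simp
  finally have "rotate_edge m k f = bedge m p"
    using blocker_class_inj[OF m0 assms(2)] f(2) assms(5) by (simp add: inj_on_def)
  then have "rotate_edge m k f = bedge m ?inner"
    by (rule rainbow_boundary_chord[OF assms(3,4) f(1)])
  moreover have "bedge m p = bedge m (?inner + m)"
    using assms(6) by (intro bedge_mod) simp
  ultimately show False
    using bedge_antipodal_ne[OF assms(1)] \<open>rotate_edge m k f = bedge m p\<close> by metis
qed

lemma three_rainbows_escape:
  assumes "2 \<le> m" "is_blocker m B"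
    and "0 < b" "b < m" "m < c" "c < 2 * m" "c - b < m"
    and "bedge m a \<in> B" "bedge m (a + b) \<in> B" "bedge m (a + c) \<in> B"
  shows False
proof -
  define L1 L2 L3 k where "L1 = m - (c - b)" and "L2 = c - m" and "L3 = m - b"
    and "k = a + 1 + c - b"
  have lengths: "L1 < m" "L2 < m" "L3 < m" "L1 + L2 + L3 = m"
    using assms(3-7) unfolding L1_def L2_def L3_def by linarith+
  have "0 + L1 - 1 + k + m = a + 2 * m"
    "2 * L1 + L2 - 1 + k + m = (a + b) + 2 * m"
    "(2 * L1 + 2 * L2) + L3 - 1 + k + m = (a + c) + 2 * m"
    using assms(3-7) unfolding L1_def L2_def L3_def k_def by linarith+
  then have inner: "a mod (2 * m) = (0 + L1 - 1 + k + m) mod (2 * m)"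
    "(a + b) mod (2 * m) = (2 * L1 + L2 - 1 + k + m) mod (2 * m)"
    "(a + c) mod (2 * m) = ((2 * L1 + 2 * L2) + L3 - 1 + k + m) mod (2 * m)"
    by (simp_all only: mod_add_self2)
  have "rotate_edge m k ` rainbow 0 L1 \<inter> B = {}"
    using assms(1,2,8) lengths inner(1) by (intro rainbow_avoids_blocker[where p = a]) simp_all
  moreover have "rotate_edge m k ` rainbow (2 * L1) L2 \<inter> B = {}"
    using assms(1,2,9) lengths inner(2)
    by (intro rainbow_avoids_blocker[where p = "a + b"]) simp_all
  moreover have "rotate_edge m k ` rainbow (2 * L1 + 2 * L2) L3 \<inter> B = {}"
    using assms(1,2,10) lengths inner(3)
    by (intro rainbow_avoids_blocker[where p = "a + c"]) simp_all
  ultimately have "rotate_edge m k ` three_rainbows L1 L2 L3 \<inter> B = {}"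
    unfolding three_rainbows_def image_Un Int_Un_distrib2 by simp
  moreover have "is_SPM m (rotate_edge m k ` three_rainbows L1 L2 L3)"
    using lengths(4) by (intro SPM_rotate SPM_three_rainbows)
  ultimately show False
    using assms(2) unfolding is_blocker_def is_blocking_set_def by blast
qed

definition window :: "nat \<Rightarrow> nat \<Rightarrow> nat set" where
  "window m \<sigma> = {(\<sigma> + k) mod (2 * m) | k. k < m}"

lemma mem_window:
  assumes "\<sigma> < 2 * m" "x < 2 * m"
  shows "x \<in> window m \<sigma> \<longleftrightarrow> (\<sigma> \<le> x \<and> x < \<sigma> + m) \<or> x + 2 * m < \<sigma> + m"
proof
  assume "x \<in> window m \<sigma>"
  then obtain k where k: "k < m" "x = (\<sigma> + k) mod (2 * m)" unfolding window_def by blast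
  show "(\<sigma> \<le> x \<and> x < \<sigma> + m) \<or> x + 2 * m < \<sigma> + m"
  proof (cases "\<sigma> + k < 2 * m")
    case True
    then show ?thesis using k by simp
  next
    case False
    then have "x = \<sigma> + k - 2 * m" using k assms(1) by (simp add: le_mod_geq)
    then show ?thesis using k False by linarith
  qed
next
  assume "(\<sigma> \<le> x \<and> x < \<sigma> + m) \<or> x + 2 * m < \<sigma> + m"
  then show "x \<in> window m \<sigma>"
  proof
    assume "\<sigma> \<le> x \<and> x < \<sigma> + m"
    then have "x - \<sigma> < m" "x = (\<sigma> + (x - \<sigma>)) mod (2 * m)" using assms(2) by auto
    then show ?thesis unfolding window_def by blast
  next
    assume "x + 2 * m < \<sigma> + m"
    moreover have "\<sigma> + (x + 2 * m - \<sigma>) = x + 2 * m" using assms(1) by simp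
    ultimately have "x + 2 * m - \<sigma> < m" "x = (\<sigma> + (x + 2 * m - \<sigma>)) mod (2 * m)"
      using assms(2) by auto
    then show ?thesis unfolding window_def by blast
  qed
qed

(* Take c the least element above m, and b an element outside the window starting at c. *)
lemma spread_positions:
  fixes T :: "nat set"
  assumes "T \<subseteq> {..<2 * m}" "0 \<in> T"
    and antipodal: "\<And>t. t \<in> T \<Longrightarrow> (t + m) mod (2 * m) \<notin> T"
    and spread: "\<And>\<sigma>. \<sigma> < 2 * m \<Longrightarrow> \<not> T \<subseteq> window m \<sigma>"
  shows "\<exists>b c. b \<in> T \<and> c \<in> T \<and> 0 < b \<and> b < m \<and> m < c \<and> c < 2 * m \<and> c - b < m"
proof -
  have m0: "0 < m" using assms(1,2) by auto
  have "m \<notin> T" using antipodal[OF assms(2)] by simp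
  obtain t0 where t0: "t0 \<in> T" "t0 \<notin> window m 0" using spread[of 0] m0 by auto
  then have "t0 < 2 * m" using assms(1) by auto
  then have "\<not> t0 < m" using mem_window[of 0 m t0] m0 t0(2) by simp
  moreover have "t0 \<noteq> m" using \<open>m \<notin> T\<close> t0(1) by blast
  ultimately have "m < t0" by simp
  define c where "c = (LEAST t. t \<in> T \<and> m < t)"
  have c: "c \<in> T" "m < c" using LeastI[of "\<lambda>t. t \<in> T \<and> m < t"] t0(1) \<open>m < t0\<close>
    unfolding c_def by blast+
  have c_least: "c \<le> t" if "t \<in> T" "m < t" for t
    using that unfolding c_def by (simp add: Least_le)
  have "c < 2 * m" using c assms(1) by auto
  obtain b where b: "b \<in> T" "b \<notin> window m c" using spread \<open>c < 2 * m\<close> by blast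
  have "b < 2 * m" using b assms(1) by auto
  then have "\<not> ((c \<le> b \<and> b < c + m) \<or> b + 2 * m < c + m)"
    using b(2) mem_window[OF \<open>c < 2 * m\<close>] by blast
  then have "c - m \<le> b" "b < c" using \<open>b < 2 * m\<close> c(2) by auto
  moreover have "b \<noteq> c - m"
  proof
    assume "b = c - m"
    then have "(b + m) mod (2 * m) = c" using c(2) \<open>c < 2 * m\<close> by simp
    then show False using antipodal[OF b(1)] c(1) by simp
  qed
  moreover have "b \<noteq> m" "\<not> m < b" using c_least[OF b(1)] \<open>b < c\<close> \<open>m \<notin> T\<close> b(1) by auto
  ultimately show ?thesis using b(1) c \<open>c < 2 * m\<close> by (intro exI[of _ b] exI[of _ c]) simp
qed

definition positions :: "nat \<Rightarrow> nat set set \<Rightarrow> nat \<Rightarrow> nat set" where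
  "positions m B a = {t. t < 2 * m \<and> bedge m (a + t) \<in> B}"

lemma positions_antipodal:
  assumes "2 \<le> m" "is_blocker m B" "t \<in> positions m B a"
  shows "(t + m) mod (2 * m) \<notin> positions m B a"
proof -
  have "bedge m (a + (t + m) mod (2 * m)) = bedge m (a + t + m)"
    by (rule bedge_mod) (simp add: mod_add_right_eq add.assoc)
  then show ?thesis
    using blocker_antipodal[OF assms(1,2), of "a + t"] assms(3) unfolding positions_def by simp
qed

lemma positions_in_window:
  assumes "0 < m" "positions m B a \<subseteq> window m \<sigma>"
  shows "B \<inter> boundary_edges m \<subseteq> {bedge m ((a + \<sigma>) mod (2 * m) + k) | k. k < m}"
proof
  fix e assume "e \<in> B \<inter> boundary_edges m"
  then obtain i where e: "e \<in> B" "e = bedge m i" unfolding boundary_edges_def by blast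
  obtain t where t: "t < 2 * m" "(a + t) mod (2 * m) = i mod (2 * m)"
    using mod_offset[of "2 * m" a i] assms(1) by auto
  have "bedge m (a + t) = e" unfolding e(2) using t(2) by (rule bedge_mod)
  then have "t \<in> window m \<sigma>" using assms(2) e(1) t(1) unfolding positions_def by blast
  then obtain k where k: "k < m" "t = (\<sigma> + k) mod (2 * m)" unfolding window_def by blast
  have "(a + t) mod (2 * m) = ((a + \<sigma>) mod (2 * m) + k) mod (2 * m)"
    unfolding k(2) by (simp add: mod_add_right_eq mod_add_left_eq add.assoc)
  then have "bedge m (a + t) = bedge m ((a + \<sigma>) mod (2 * m) + k)" by (rule bedge_mod)
  then show "e \<in> {bedge m ((a + \<sigma>) mod (2 * m) + k) | k. k < m}"
    using k(1) \<open>bedge m (a + t) = e\<close> by blast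
qed

lemma spread_boundary_edges:
  assumes "2 \<le> m" "is_blocker m B"
    and no_window: "\<not> (\<exists>s < 2 * m. B \<inter> boundary_edges m \<subseteq> {bedge m (s + k) | k. k < m})"
  shows "\<exists>a b c. 0 < b \<and> b < m \<and> m < c \<and> c < 2 * m \<and> c - b < m \<and>
    bedge m a \<in> B \<and> bedge m (a + b) \<in> B \<and> bedge m (a + c) \<in> B"
proof -
  have m0: "0 < m" using assms(1) by simp
  have window_mod: "(a + \<sigma>) mod (2 * m) < 2 * m" for a \<sigma> using m0 by simp
  have "\<not> B \<inter> boundary_edges m \<subseteq> {bedge m ((0 + 0) mod (2 * m) + k) | k. k < m}"
    using no_window window_mod[of 0 0] by blast
  then obtain a where a: "bedge m a \<in> B" unfolding boundary_edges_def by blast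
  have "positions m B a \<subseteq> {..<2 * m}" "0 \<in> positions m B a"
    using a m0 unfolding positions_def by auto
  moreover have "\<And>t. t \<in> positions m B a \<Longrightarrow> (t + m) mod (2 * m) \<notin> positions m B a"
    using assms(1,2) by (rule positions_antipodal)
  moreover have "\<not> positions m B a \<subseteq> window m \<sigma>" for \<sigma>
    using positions_in_window[OF m0, of B a \<sigma>] no_window window_mod[of a \<sigma>] by blast
  ultimately have "\<exists>b c. b \<in> positions m B a \<and> c \<in> positions m B a \<and>
      0 < b \<and> b < m \<and> m < c \<and> c < 2 * m \<and> c - b < m"
    by (rule spread_positions)
  then show ?thesis using a unfolding positions_def by blast
qed

theorem lemma3p3:
  fixes m :: nat and B :: "nat set set"
  assumes "m \<ge> 2" and "is_blocker m B"
  shows "\<exists>s < 2*m. B \<inter> boundary_edges m \<subseteq> {bedge m (s + k) | k. k < m}"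
proof (rule ccontr)
  assume "\<not> ?thesis"
  then obtain a b c where "0 < b" "b < m" "m < c" "c < 2 * m" "c - b < m"
    and "bedge m a \<in> B" "bedge m (a + b) \<in> B" "bedge m (a + c) \<in> B"
    using spread_boundary_edges[OF assms] by blast
  then show False by (rule three_rainbows_escape[OF assms])
qed

end
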